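(* Let $G$ be a group definable in some first-order structure, satisfying the descending chain condition on definable subgroups. Then: (a) every maximal nilpotent subgroup of $G$ is definable; (a') if $Q$ is a Cartan subgroup of $G$, then $Q$ is definable and $Q^\circ$ is a Carter subgroup of $G$; (b) if $Q$ is a Carter subgroup of $G$, then $Q$ is contained in a maximal nilpotent subgroup $\tilde Q$ of $G$, and every such $\tilde Q$ is a Cartan subgroup of $G$ with $\tilde Q^\circ=Q$.
   Context: The descending chain condition means every strictly descending chain of definable subgroups is finite. For a definable subgroup $H$, $H^\circ$ denotes the smallest definable subgroup of finite index in $H$ (it exists by the chain condition); $H$ is definably connected if $H=H^\circ$. A Cartan subgroup of $G$ is a maximal nilpotent subgroup $Q$ such that every normal finite-index subgroup $X$ of $Q$ has finite index in $N_G(X)$. A Carter subgroup of $G$ is a definable, definably connected, nilpotent subgroup $Q$ of finite index in $N_G(Q)$. *)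

theory Defs
  imports "HOL-Algebra.Algebra" "HOL-Algebra.Group_Action"
begin

(* First-order formulas over the group language (multiplication atom) expanded by
   arbitrary relation symbols of type 'r (the extra structure). Variables are nat. *)
datatype 'r fm =
    Rel 'r "nat list"
  | Eq nat nat
  | Mul nat nat nat
  | Neg "'r fm"
  | Conj "'r fm" "'r fm"
  | Ex nat "'r fm"

fun sat :: "('a, 'b) monoid_scheme \<Rightarrow> ('r \<Rightarrow> 'a list set) \<Rightarrow> 'r fm \<Rightarrow> (nat \<Rightarrow> 'a) \<Rightarrow> bool" where
  "sat G R (Rel r vs) e = (map e vs \<in> R r)"
| "sat G R (Eq i j) e = (e i = e j)"
| "sat G R (Mul i j k) e = (e i \<otimes>\<^bsub>G\<^esub> e j = e k)"
| "sat G R (Neg \<phi>) e = (\<not> sat G R \<phi> e)"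
| "sat G R (Conj \<phi> \<psi>) e = (sat G R \<phi> e \<and> sat G R \<psi> e)"
| "sat G R (Ex n \<phi>) e = (\<exists>x\<in>carrier G. sat G R \<phi> (e(n := x)))"

definition definable :: "('a, 'b) monoid_scheme \<Rightarrow> ('r \<Rightarrow> 'a list set) \<Rightarrow> 'a set \<Rightarrow> bool" where
  "definable G R S \<longleftrightarrow> (\<exists>\<phi> e. (\<forall>i. e i \<in> carrier G) \<and>
      S = {x \<in> carrier G. sat G R \<phi> (e(0 := x))})"

definition def_subgroup :: "('a, 'b) monoid_scheme \<Rightarrow> ('r \<Rightarrow> 'a list set) \<Rightarrow> 'a set \<Rightarrow> bool" where
  "def_subgroup G R H \<longleftrightarrow> subgroup H G \<and> definable G R H"

definition dcc :: "('a, 'b) monoid_scheme \<Rightarrow> ('r \<Rightarrow> 'a list set) \<Rightarrow> bool" where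
  "dcc G R \<longleftrightarrow> \<not> (\<exists>f :: nat \<Rightarrow> 'a set. \<forall>n. def_subgroup G R (f n) \<and> f (Suc n) \<subset> f n)"

definition fin_index :: "('a, 'b) monoid_scheme \<Rightarrow> 'a set \<Rightarrow> 'a set \<Rightarrow> bool" where
  "fin_index G K H \<longleftrightarrow> K \<subseteq> H \<and> finite {K #>\<^bsub>G\<^esub> h | h. h \<in> H}"

fun lcs :: "('a, 'b) monoid_scheme \<Rightarrow> 'a set \<Rightarrow> nat \<Rightarrow> 'a set" where
  "lcs G H 0 = H"
| "lcs G H (Suc n) = generate G
     {x \<otimes>\<^bsub>G\<^esub> y \<otimes>\<^bsub>G\<^esub> inv\<^bsub>G\<^esub> x \<otimes>\<^bsub>G\<^esub> inv\<^bsub>G\<^esub> y | x y. x \<in> lcs G H n \<and> y \<in> H}"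

definition nilpotent_subgroup :: "('a, 'b) monoid_scheme \<Rightarrow> 'a set \<Rightarrow> bool" where
  "nilpotent_subgroup G H \<longleftrightarrow> subgroup H G \<and> (\<exists>n. lcs G H n = {\<one>\<^bsub>G\<^esub>})"

definition max_nilpotent :: "('a, 'b) monoid_scheme \<Rightarrow> 'a set \<Rightarrow> bool" where
  "max_nilpotent G H \<longleftrightarrow> nilpotent_subgroup G H \<and>
     (\<forall>K. nilpotent_subgroup G K \<and> H \<subseteq> K \<longrightarrow> K = H)"

(* H\<degree>: smallest definable subgroup of finite index in H (intersection of all of them;
   under dcc this intersection is itself one of them) *)
definition conn_comp :: "('a, 'b) monoid_scheme \<Rightarrow> ('r \<Rightarrow> 'a list set) \<Rightarrow> 'a set \<Rightarrow> 'a set" where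
  "conn_comp G R H = \<Inter> {K. def_subgroup G R K \<and> fin_index G K H}"

definition cartan :: "('a, 'b) monoid_scheme \<Rightarrow> 'a set \<Rightarrow> bool" where
  "cartan G Q \<longleftrightarrow> max_nilpotent G Q \<and>
     (\<forall>N. N \<lhd> (G\<lparr>carrier := Q\<rparr>) \<and> fin_index G N Q \<longrightarrow> fin_index G N (normalizer G N))"

definition carter :: "('a, 'b) monoid_scheme \<Rightarrow> ('r \<Rightarrow> 'a list set) \<Rightarrow> 'a set \<Rightarrow> bool" where
  "carter G R Q \<longleftrightarrow> def_subgroup G R Q \<and> conn_comp G R Q = Q \<and>
     nilpotent_subgroup G Q \<and> fin_index G Q (normalizer G Q)"

end

theory Submission
  imports Defs
begin

text \<open>The chain condition is used in one form: a nonempty family of definable subgroups closed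
  under finite intersections contains its intersection. This gives the definable hull \<open>d(S)\<close>
  of a set and the connected component \<open>H\<degree>\<close>. Since conjugation and commutation by a fixed
  element are definable, \<open>[d(A), d(B)] \<subseteq> d(C)\<close> whenever \<open>[A, B] \<subseteq> C\<close> and \<open>A, B\<close> normalise
  \<open>C\<close>; along the lower central series this makes the hull of a nilpotent group nilpotent, so
  maximal nilpotent subgroups equal their hulls.

  A connected definable \<open>Q\<close> of finite index in \<open>N(Q)\<close> is rigid: an element conjugating \<open>Q\<close> into
  \<open>N(Q)\<close> normalises \<open>Q\<close>. Descending the lower central series of a nilpotent \<open>K \<supseteq> Q\<close> then gives
  \<open>K \<subseteq> N(Q)\<close>. So the nilpotent overgroups of a Carter subgroup lie between \<open>Q\<close> and \<open>N(Q)\<close> and are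
  finitely many, and such an overgroup contains \<open>Q\<close> with finite index, which identifies its
  connected component and confines the normalisers of its finite-index normal subgroups to
  \<open>N(Q)\<close>. Conversely the connected component of a Cartan subgroup is a finite-index normal
  subgroup, hence of finite index in its normaliser.\<close>

section \<open>Definability with parameters\<close>

fun rename_fm :: "(nat \<Rightarrow> nat) \<Rightarrow> 'r fm \<Rightarrow> 'r fm" where
  "rename_fm f (Rel r vs) = Rel r (map f vs)"
| "rename_fm f (Eq i j) = Eq (f i) (f j)"
| "rename_fm f (Mul i j k) = Mul (f i) (f j) (f k)"
| "rename_fm f (Neg \<phi>) = Neg (rename_fm f \<phi>)"
| "rename_fm f (Conj \<phi> \<psi>) = Conj (rename_fm f \<phi>) (rename_fm f \<psi>)"
| "rename_fm f (Ex n \<phi>) = Ex (f n) (rename_fm f \<phi>)"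

lemma sat_rename_fm: "inj f \<Longrightarrow> sat G R (rename_fm f \<phi>) e = sat G R \<phi> (e \<circ> f)"
proof (induction \<phi> arbitrary: e)
  case (Ex n \<phi>)
  have upd: "e(f n := x) \<circ> f = (e \<circ> f)(n := x)" for x
    using Ex.prems by (auto simp: fun_eq_iff inj_eq)
  show ?case
    using Ex.IH[OF Ex.prems] by (simp only: sat.simps rename_fm.simps upd)
qed (simp_all add: comp_def)

text \<open>A property of valuations is definable by a formula with parameters \<open>p\<close>: variable \<open>i\<close>
  of the property is formula variable \<open>2 i\<close>, parameter \<open>i\<close> is formula variable \<open>2 i + 1\<close>.\<close>

definition interleave :: "(nat \<Rightarrow> 'a) \<Rightarrow> (nat \<Rightarrow> 'a) \<Rightarrow> nat \<Rightarrow> 'a" where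
  "interleave e p i = (if even i then e (i div 2) else p (i div 2))"

definition definable_pred ::
    "('a, 'b) monoid_scheme \<Rightarrow> ('r \<Rightarrow> 'a list set) \<Rightarrow> ((nat \<Rightarrow> 'a) \<Rightarrow> bool) \<Rightarrow> bool" where
  "definable_pred G R P \<longleftrightarrow> (\<exists>(\<phi>::'r fm) p. (\<forall>i. p i \<in> carrier G) \<and>
      (\<forall>e. (\<forall>i. e i \<in> carrier G) \<longrightarrow> P e = sat G R \<phi> (interleave e p)))"

lemma interleave_even [simp]: "interleave e p (2 * i) = e i"
  and interleave_odd [simp]: "interleave e p (2 * i + 1) = p i"
  by (auto simp: interleave_def)

lemma definable_predI:
  "(\<forall>i. p i \<in> carrier G) \<Longrightarrow> (\<And>e. \<forall>i. e i \<in> carrier G \<Longrightarrow> P e = sat G R \<phi> (interleave e p))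
    \<Longrightarrow> definable_pred G R P"
  unfolding definable_pred_def by blast

lemma definable_pred_cong:
  "definable_pred G R P \<Longrightarrow> (\<And>e. \<forall>i. e i \<in> carrier G \<Longrightarrow> P e = Q e) \<Longrightarrow> definable_pred G R Q"
  unfolding definable_pred_def by metis

lemma definable_pred_Not: "definable_pred G R P \<Longrightarrow> definable_pred G R (\<lambda>e. \<not> P e)"
  unfolding definable_pred_def by (metis sat.simps(4))

lemma definable_pred_conj:
  assumes "definable_pred G R P" "definable_pred G R Q"
  shows "definable_pred G R (\<lambda>e. P e \<and> Q e)"
proof -
  obtain \<phi>1 p1 where p1: "\<forall>i. p1 i \<in> carrier G"
    and \<phi>1: "\<And>e. \<forall>i. e i \<in> carrier G \<Longrightarrow> P e = sat G R \<phi>1 (interleave e p1)"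
    using assms(1) unfolding definable_pred_def by blast
  obtain \<phi>2 p2 where p2: "\<forall>i. p2 i \<in> carrier G"
    and \<phi>2: "\<And>e. \<forall>i. e i \<in> carrier G \<Longrightarrow> Q e = sat G R \<phi>2 (interleave e p2)"
    using assms(2) unfolding definable_pred_def by blast
  \<comment> \<open>The parameters of \<open>\<phi>1\<close> and \<open>\<phi>2\<close> are moved to positions \<open>4 i + 1\<close> and \<open>4 i + 3\<close>.\<close>
  define f1 where "f1 n = (if even n then n else 4 * (n div 2) + 1)" for n :: nat
  define f2 where "f2 n = (if even n then n else 4 * (n div 2) + 3)" for n :: nat
  define p where "p j = (if even j then p1 (j div 2) else p2 (j div 2))" for j
  have "inj f1" "inj f2"
    unfolding f1_def f2_def by (rule inj_onI; auto split: if_splits elim!: evenE oddE; presburger)+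
  moreover have "interleave e p \<circ> f1 = interleave e p1" "interleave e p \<circ> f2 = interleave e p2" for e
  proof -
    have "(interleave e p \<circ> f1) n = interleave e p1 n \<and> (interleave e p \<circ> f2) n = interleave e p2 n"
      for n
    proof (cases "even n")
      case False
      then obtain b where n: "n = 2 * b + 1" by (rule oddE)
      then have "f1 n = 2 * (2 * b) + 1" "f2 n = 2 * (2 * b + 1) + 1"
        by (simp_all add: f1_def f2_def)
      moreover have "p (2 * b) = p1 b" "p (2 * b + 1) = p2 b"
        by (simp_all add: p_def)
      ultimately show ?thesis
        using n by (simp only: comp_apply interleave_odd)
    qed (simp add: f1_def f2_def interleave_def)
    then show "interleave e p \<circ> f1 = interleave e p1" "interleave e p \<circ> f2 = interleave e p2"
      by auto
  qed
  ultimately show ?thesis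
  proof (intro definable_predI[where \<phi> = "Conj (rename_fm f1 \<phi>1) (rename_fm f2 \<phi>2)"])
    show "\<forall>i. p i \<in> carrier G"
      using p1 p2 by (simp add: p_def)
  qed (simp add: \<phi>1 \<phi>2 sat_rename_fm)
qed

lemma definable_pred_bex:
  assumes "definable_pred G R P"
    and "\<And>e. \<forall>i. e i \<in> carrier G \<Longrightarrow> Q e \<longleftrightarrow> (\<exists>x\<in>carrier G. P (e(k := x)))"
  shows "definable_pred G R Q"
proof -
  obtain \<phi> p where p: "\<forall>i. p i \<in> carrier G"
    and \<phi>: "\<And>e. \<forall>i. e i \<in> carrier G \<Longrightarrow> P e = sat G R \<phi> (interleave e p)"
    using assms(1) unfolding definable_pred_def by blast
  have upd: "(interleave e p)(2 * k := x) = interleave (e(k := x)) p" for e x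
    unfolding interleave_def fun_eq_iff by auto
  show ?thesis
  proof (rule definable_predI[where p = p and \<phi> = "Ex (2 * k) \<phi>"])
    fix e :: "nat \<Rightarrow> _" assume e: "\<forall>i. e i \<in> carrier G"
    have "P (e(k := x)) = sat G R \<phi> (interleave (e(k := x)) p)" if "x \<in> carrier G" for x
      using e that by (intro \<phi>) simp
    then show "Q e = sat G R (Ex (2 * k) \<phi>) (interleave e p)"
      using assms(2)[OF e] by (simp add: upd)
  qed (use p in simp)
qed

lemma definable_pred_ball:
  assumes "definable_pred G R P"
    and "\<And>e. \<forall>i. e i \<in> carrier G \<Longrightarrow> Q e \<longleftrightarrow> (\<forall>x\<in>carrier G. P (e(k := x)))"
  shows "definable_pred G R Q"
proof -
  have "definable_pred G R (\<lambda>e. \<exists>x\<in>carrier G. \<not> P (e(k := x)))"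
    using definable_pred_Not[OF assms(1)] by (rule definable_pred_bex) simp
  from definable_pred_Not[OF this] show ?thesis
    by (rule definable_pred_cong) (simp add: assms(2))
qed

lemma definable_pred_mem:
  assumes "definable G R S"
  shows "definable_pred G R (\<lambda>e. e k \<in> S)"
proof -
  obtain \<phi> p where p: "\<forall>i. p i \<in> carrier G" and S: "S = {x \<in> carrier G. sat G R \<phi> (p(0 := x))}"
    using assms unfolding definable_def by blast
  define f where "f n = (if n = 0 then 2 * k else 2 * n + 1)" for n
  have "inj f" unfolding f_def inj_def by presburger
  moreover have "interleave e p \<circ> f = p(0 := e k)" for e
    unfolding f_def fun_eq_iff comp_def by (simp add: interleave_def)
  ultimately have "e k \<in> S \<longleftrightarrow> sat G R (rename_fm f \<phi>) (interleave e p)" if "\<forall>i. e i \<in> carrier G" for e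
    using that by (simp add: S sat_rename_fm)
  with p show ?thesis by (rule definable_predI)
qed

context group
begin

lemma definable_pred_eq: "definable_pred G R (\<lambda>e. e i = e j)"
  by (rule definable_predI[where p = "\<lambda>_. \<one>" and \<phi> = "Eq (2 * i) (2 * j)"]) simp_all

lemma definable_pred_eq_const: "c \<in> carrier G \<Longrightarrow> definable_pred G R (\<lambda>e. e i = c)"
  by (rule definable_predI[where p = "\<lambda>_. c" and \<phi> = "Eq (2 * i) 1"]) (simp_all add: interleave_def)

lemma definable_pred_mult: "definable_pred G R (\<lambda>e. e i \<otimes> e j = e k)"
  by (rule definable_predI[where p = "\<lambda>_. \<one>" and \<phi> = "Mul (2 * i) (2 * j) (2 * k)"]) simp_all

lemma definable_pred_mult_eq_const: "c \<in> carrier G \<Longrightarrow> definable_pred G R (\<lambda>e. e i \<otimes> e j = c)"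
  by (rule definable_predI[where p = "\<lambda>_. c" and \<phi> = "Mul (2 * i) (2 * j) 1"])
    (simp_all add: interleave_def)

lemma definableI:
  assumes "definable_pred G R (\<lambda>e. P (e 0))"
  shows "definable G R {x \<in> carrier G. P x}"
proof -
  obtain \<phi> p where p: "\<forall>i. p i \<in> carrier G"
    and \<phi>: "\<And>e. \<forall>i. e i \<in> carrier G \<Longrightarrow> P (e 0) = sat G R \<phi> (interleave e p)"
    using assms unfolding definable_pred_def by blast
  have upd: "interleave ((\<lambda>_. \<one>)(0 := x)) p = (interleave (\<lambda>_. \<one>) p)(0 := x)" for x
    unfolding interleave_def fun_eq_iff by auto
  have "P x = sat G R \<phi> ((interleave (\<lambda>_. \<one>) p)(0 := x))" if "x \<in> carrier G" for x
    using \<phi>[of "(\<lambda>_. \<one>)(0 := x)"] that by (simp add: upd)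
  then have "{x \<in> carrier G. P x} = {x \<in> carrier G. sat G R \<phi> ((interleave (\<lambda>_. \<one>) p)(0 := x))}"
    by blast
  moreover have "\<forall>i. interleave (\<lambda>_. \<one>) p i \<in> carrier G"
    using p by (simp add: interleave_def)
  ultimately show ?thesis unfolding definable_def by blast
qed

end

datatype 'a gterm = GVar nat | GConst 'a | GMult "'a gterm" "'a gterm" | GInv "'a gterm"

primrec eval_gterm :: "('a, 'b) monoid_scheme \<Rightarrow> (nat \<Rightarrow> 'a) \<Rightarrow> 'a gterm \<Rightarrow> 'a" where
  "eval_gterm G e (GVar i) = e i"
| "eval_gterm G e (GConst a) = a"
| "eval_gterm G e (GMult s t) = eval_gterm G e s \<otimes>\<^bsub>G\<^esub> eval_gterm G e t"
| "eval_gterm G e (GInv t) = inv\<^bsub>G\<^esub> eval_gterm G e t"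

primrec gterm_vars :: "'a gterm \<Rightarrow> nat set" where
  "gterm_vars (GVar i) = {i}"
| "gterm_vars (GConst a) = {}"
| "gterm_vars (GMult s t) = gterm_vars s \<union> gterm_vars t"
| "gterm_vars (GInv t) = gterm_vars t"

primrec gterm_consts :: "'a gterm \<Rightarrow> 'a set" where
  "gterm_consts (GVar i) = {}"
| "gterm_consts (GConst a) = {a}"
| "gterm_consts (GMult s t) = gterm_consts s \<union> gterm_consts t"
| "gterm_consts (GInv t) = gterm_consts t"

lemma finite_gterm_vars [simp]: "finite (gterm_vars t)"
  by (induction t) auto

lemma eval_gterm_cong: "(\<And>i. i \<in> gterm_vars t \<Longrightarrow> e i = e' i) \<Longrightarrow> eval_gterm G e t = eval_gterm G e' t"
  by (induction t) auto

lemma eval_gterm_upd [simp]: "m \<notin> gterm_vars t \<Longrightarrow> eval_gterm G (e(m := x)) t = eval_gterm G e t"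
  by (rule eval_gterm_cong) auto

context group
begin

lemma eval_gterm_closed:
  "\<forall>i. e i \<in> carrier G \<Longrightarrow> gterm_consts t \<subseteq> carrier G \<Longrightarrow> eval_gterm G e t \<in> carrier G"
  by (induction t) auto

lemma definable_pred_eq_eval_gterm:
  "gterm_consts t \<subseteq> carrier G \<Longrightarrow> k \<notin> gterm_vars t \<Longrightarrow>
    definable_pred G R (\<lambda>e. e k = eval_gterm G e t)"
proof (induction t arbitrary: k)
  case (GVar i)
  then show ?case by (simp add: definable_pred_eq)
next
  case (GConst a)
  then show ?case by (simp add: definable_pred_eq_const)
next
  case (GMult s t)
  obtain m1 where m1: "m1 \<notin> insert k (gterm_vars s \<union> gterm_vars t)"
    using ex_new_if_finite[OF infinite_UNIV_nat, of "insert k (gterm_vars s \<union> gterm_vars t)"] by auto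
  obtain m2 where m2: "m2 \<notin> insert m1 (insert k (gterm_vars s \<union> gterm_vars t))"
    using ex_new_if_finite[OF infinite_UNIV_nat, of "insert m1 (insert k (gterm_vars s \<union> gterm_vars t))"] by auto
  have "definable_pred G R (\<lambda>e. e m1 = eval_gterm G e s \<and> e m2 = eval_gterm G e t \<and> e m1 \<otimes> e m2 = e k)"
    using GMult m1 m2 by (intro definable_pred_conj definable_pred_mult) auto
  then have "definable_pred G R (\<lambda>e. \<exists>x\<in>carrier G.
      x = eval_gterm G e s \<and> e m2 = eval_gterm G e t \<and> x \<otimes> e m2 = e k)"
    by (rule definable_pred_bex[where k = m1]) (use m1 m2 in auto)
  then have "definable_pred G R (\<lambda>e. \<exists>y\<in>carrier G. \<exists>x\<in>carrier G.
      x = eval_gterm G e s \<and> y = eval_gterm G e t \<and> x \<otimes> y = e k)"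
    by (rule definable_pred_bex[where k = m2]) (use m1 m2 in auto)
  then show ?case
    by (rule definable_pred_cong) (use GMult.prems in \<open>auto intro: eval_gterm_closed\<close>)
next
  case (GInv t)
  obtain m where m: "m \<notin> insert k (gterm_vars t)"
    using ex_new_if_finite[OF infinite_UNIV_nat, of "insert k (gterm_vars t)"] by auto
  have "definable_pred G R (\<lambda>e. e m = eval_gterm G e t \<and> e k \<otimes> e m = \<one>)"
    using GInv m by (intro definable_pred_conj definable_pred_mult_eq_const) auto
  then have "definable_pred G R (\<lambda>e. \<exists>x\<in>carrier G. x = eval_gterm G e t \<and> e k \<otimes> x = \<one>)"
    by (rule definable_pred_bex[where k = m]) (use m in auto)
  then show ?case
  proof (rule definable_pred_cong)
    fix e :: "nat \<Rightarrow> 'a" assume e: "\<forall>i. e i \<in> carrier G"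
    then have "eval_gterm G e t \<in> carrier G"
      using GInv.prems by (auto intro: eval_gterm_closed)
    with e show "(\<exists>x\<in>carrier G. x = eval_gterm G e t \<and> e k \<otimes> x = \<one>) = (e k = eval_gterm G e (GInv t))"
      using inv_equality[of "e k" "eval_gterm G e t"] by auto
  qed
qed

lemma definable_pred_eval_gterm_mem:
  assumes "gterm_consts t \<subseteq> carrier G" "definable G R D"
  shows "definable_pred G R (\<lambda>e. eval_gterm G e t \<in> D)"
proof -
  obtain m where m: "m \<notin> gterm_vars t"
    using ex_new_if_finite[OF infinite_UNIV_nat, of "gterm_vars t"] by auto
  have "definable_pred G R (\<lambda>e. e m = eval_gterm G e t \<and> e m \<in> D)"
    using assms m by (intro definable_pred_conj definable_pred_eq_eval_gterm definable_pred_mem)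
  then have "definable_pred G R (\<lambda>e. \<exists>x\<in>carrier G. x = eval_gterm G e t \<and> x \<in> D)"
    by (rule definable_pred_bex[where k = m]) (use m in auto)
  then show ?thesis
    by (rule definable_pred_cong) (use assms(1) in \<open>auto intro: eval_gterm_closed\<close>)
qed

lemma definable_eval_gterm_preimage:
  assumes "gterm_consts t \<subseteq> carrier G" "gterm_vars t \<subseteq> {0}" "definable G R D"
  shows "definable G R {x \<in> carrier G. eval_gterm G (\<lambda>_. x) t \<in> D}"
proof (rule definableI)
  show "definable_pred G R (\<lambda>e. eval_gterm G (\<lambda>_. e 0) t \<in> D)"
    using definable_pred_eval_gterm_mem[OF assms(1,3)]
  proof (rule definable_pred_cong)
    fix e :: "nat \<Rightarrow> 'a"
    have "eval_gterm G e t = eval_gterm G (\<lambda>_. e 0) t"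
      using assms(2) by (intro eval_gterm_cong) auto
    then show "(eval_gterm G e t \<in> D) = (eval_gterm G (\<lambda>_. e 0) t \<in> D)" by simp
  qed
qed

lemma definable_Int:
  assumes "definable G R A" "definable G R B"
  shows "definable G R (A \<inter> B)"
proof -
  have "A \<inter> B = {x \<in> carrier G. x \<in> A \<and> x \<in> B}"
    using assms(1) unfolding definable_def by auto
  also have "definable G R \<dots>"
    using assms by (intro definableI definable_pred_conj definable_pred_mem)
  finally show ?thesis .
qed

lemma definable_carrier: "definable G R (carrier G)"
  unfolding definable_def by (intro exI[of _ "Eq 0 0"] exI[of _ "\<lambda>_. \<one>"]) auto

lemma definable_one: "definable G R {\<one>}"
proof -
  have "definable G R {x \<in> carrier G. x = \<one>}"
    by (intro definableI definable_pred_eq_const) simp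
  then show ?thesis by (simp add: Collect_conv_if)
qed

section \<open>Subgroups of finite index and normalizers\<close>

lemma inv_mult_cancel_left [simp]: "x \<in> carrier G \<Longrightarrow> y \<in> carrier G \<Longrightarrow> inv x \<otimes> (x \<otimes> y) = y"
  by (simp add: m_assoc[symmetric])

lemma mult_inv_cancel_left [simp]: "x \<in> carrier G \<Longrightarrow> y \<in> carrier G \<Longrightarrow> x \<otimes> (inv x \<otimes> y) = y"
  by (simp add: m_assoc[symmetric])

lemma rcos_eq_iff:
  assumes "subgroup H G" "a \<in> carrier G" "b \<in> carrier G"
  shows "H #> a = H #> b \<longleftrightarrow> a \<otimes> inv b \<in> H"
proof
  assume "H #> a = H #> b"
  then have "a \<in> H #> b" using rcos_self[OF assms(2,1)] by simp
  then show "a \<otimes> inv b \<in> H" using subgroup.rcos_module[OF assms(1) is_group assms(3,2)] by simp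
next
  assume "a \<otimes> inv b \<in> H"
  then have "a \<in> H #> b" using subgroup.rcos_module[OF assms(1) is_group assms(3,2)] by simp
  then show "H #> a = H #> b" using repr_independence[OF _ assms(3,1)] by simp
qed

lemma finite_rcosets_via_map:
  assumes "subgroup K G" "H \<subseteq> carrier G" "finite (F ` H)"
    and "\<And>h h'. h \<in> H \<Longrightarrow> h' \<in> H \<Longrightarrow> F h = F h' \<Longrightarrow> h \<otimes> inv h' \<in> K"
  shows "finite {K #> h | h. h \<in> H}"
proof -
  define rep where "rep y = (SOME h. h \<in> H \<and> F h = y)" for y
  have "K #> h = K #> rep (F h)" if "h \<in> H" for h
  proof -
    have "rep (F h) \<in> H \<and> F (rep (F h)) = F h"
      unfolding rep_def by (rule someI[of _ h]) (simp add: that)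
    then show ?thesis
      using that assms(2,4) by (subst rcos_eq_iff[OF assms(1)]) auto
  qed
  then have "{K #> h | h. h \<in> H} \<subseteq> (\<lambda>y. K #> rep y) ` F ` H" by blast
  then show ?thesis using finite_subset assms(3) by blast
qed

lemma fin_index_refl:
  assumes "subgroup H G"
  shows "fin_index G H H"
proof -
  have "{H #> h | h. h \<in> H} \<subseteq> {H}"
    using subgroup.rcos_const[OF assms is_group] by auto
  then show ?thesis unfolding fin_index_def by (auto intro: finite_subset)
qed

lemma fin_index_subset:
  assumes "fin_index G K H" "K \<subseteq> L" "L \<subseteq> H"
  shows "fin_index G K L"
proof -
  have "{K #> h | h. h \<in> L} \<subseteq> {K #> h | h. h \<in> H}"
    using assms(3) by blast
  then show ?thesis
    using assms unfolding fin_index_def by (meson finite_subset)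
qed

lemma fin_index_Int:
  assumes "subgroup K G" "subgroup M G" "fin_index G K Q" "fin_index G M Q" "Q \<subseteq> carrier G"
  shows "fin_index G (K \<inter> M) Q"
proof -
  have "finite {(K \<inter> M) #> h | h. h \<in> Q}"
  proof (rule finite_rcosets_via_map[where F = "\<lambda>h. (K #> h, M #> h)"])
    have "(\<lambda>h. (K #> h, M #> h)) ` Q \<subseteq> {K #> h | h. h \<in> Q} \<times> {M #> h | h. h \<in> Q}" by auto
    then show "finite ((\<lambda>h. (K #> h, M #> h)) ` Q)"
      using assms(3,4) unfolding fin_index_def by (meson finite_SigmaI finite_subset)
    fix h h' assume h: "h \<in> Q" "h' \<in> Q" "(K #> h, M #> h) = (K #> h', M #> h')"
    then have "h \<in> carrier G" "h' \<in> carrier G" using assms(5) by auto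
    with h(3) show "h \<otimes> inv h' \<in> K \<inter> M"
      using rcos_eq_iff[OF assms(1)] rcos_eq_iff[OF assms(2)] by simp
  qed (use assms subgroups_Inter_pair in auto)
  then show ?thesis using assms unfolding fin_index_def by auto
qed

lemma fin_index_Int_subgroup:
  assumes "subgroup K G" "subgroup L G" "fin_index G K H" "L \<subseteq> H"
  shows "fin_index G (K \<inter> L) L"
proof -
  have L: "L \<subseteq> carrier G" using assms(2) subgroup.subset by blast
  have "finite {(K \<inter> L) #> h | h. h \<in> L}"
  proof (rule finite_rcosets_via_map[where F = "\<lambda>h. K #> h"])
    have "(\<lambda>h. K #> h) ` L \<subseteq> {K #> h | h. h \<in> H}" using assms(4) by auto
    then show "finite ((\<lambda>h. K #> h) ` L)"
      using assms(3) unfolding fin_index_def by (blast intro: finite_subset)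
    fix h h' assume "h \<in> L" "h' \<in> L" "K #> h = K #> h'"
    moreover have "h \<otimes> inv h' \<in> L"
      using \<open>h \<in> L\<close> \<open>h' \<in> L\<close> assms(2) by (simp add: subgroup.m_closed subgroup.m_inv_closed)
    ultimately show "h \<otimes> inv h' \<in> K \<inter> L"
      using rcos_eq_iff[OF assms(1)] L by blast
  qed (use assms L subgroups_Inter_pair in auto)
  then show ?thesis unfolding fin_index_def by auto
qed

lemma fin_index_supergroup:
  assumes "subgroup K G" "subgroup L G" "fin_index G K H" "K \<subseteq> L" "L \<subseteq> H" "H \<subseteq> carrier G"
  shows "fin_index G L H"
proof -
  have "finite {L #> h | h. h \<in> H}"
  proof (rule finite_rcosets_via_map[where F = "\<lambda>h. K #> h"])
    show "finite ((\<lambda>h. K #> h) ` H)"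
      using assms(3) unfolding fin_index_def by (simp add: setcompr_eq_image)
    fix h h' assume "h \<in> H" "h' \<in> H" "K #> h = K #> h'"
    then show "h \<otimes> inv h' \<in> L"
      using rcos_eq_iff[OF assms(1)] assms(4,6) by blast
  qed (use assms in auto)
  then show ?thesis using assms unfolding fin_index_def by auto
qed

text \<open>Cosets of \<open>N\<close> in \<open>M\<close> are recorded by the coset of \<open>Q\<close> they lie in together with the
  coset of \<open>N\<close> in \<open>Q\<close> obtained after moving to a fixed representative of that \<open>Q\<close>-coset.\<close>

lemma fin_index_trans:
  assumes "subgroup N G" "subgroup Q G" "fin_index G N Q" "fin_index G Q M" "M \<subseteq> carrier G"
  shows "fin_index G N M"
proof -
  define rep where "rep C = (SOME y. y \<in> M \<and> C = Q #> y)" for C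
  have rep: "rep (Q #> m) \<in> M \<and> Q #> m = Q #> rep (Q #> m)" if "m \<in> M" for m
    unfolding rep_def by (rule someI[of _ m]) (simp add: that)
  define F where "F m = (Q #> m, N #> (m \<otimes> inv (rep (Q #> m))))" for m
  have in_Q: "m \<otimes> inv (rep (Q #> m)) \<in> Q" if "m \<in> M" for m
  proof -
    have "m \<in> carrier G" "rep (Q #> m) \<in> carrier G" using rep[OF that] that assms(5) by auto
    then show ?thesis using rep[OF that] rcos_eq_iff[OF assms(2)] by simp
  qed
  have "finite {N #> h | h. h \<in> M}"
  proof (rule finite_rcosets_via_map[where F = F])
    have "F ` M \<subseteq> {Q #> h | h. h \<in> M} \<times> {N #> h | h. h \<in> Q}"
      using in_Q unfolding F_def by blast
    then show "finite (F ` M)"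
      using assms(3,4) unfolding fin_index_def by (meson finite_SigmaI finite_subset)
    fix h h' assume h: "h \<in> M" "h' \<in> M" "F h = F h'"
    define r where "r = rep (Q #> h)"
    have hc: "h \<in> carrier G" "h' \<in> carrier G" "r \<in> carrier G"
      using h rep[OF h(1)] assms(5) unfolding r_def by auto
    have "N #> (h \<otimes> inv r) = N #> (h' \<otimes> inv r)"
      using h(3) unfolding F_def r_def by auto
    then have "(h \<otimes> inv r) \<otimes> inv (h' \<otimes> inv r) \<in> N"
      using rcos_eq_iff[OF assms(1)] hc by simp
    also have "(h \<otimes> inv r) \<otimes> inv (h' \<otimes> inv r) = h \<otimes> inv h'"
      using hc by (simp add: inv_mult_group m_assoc)
    finally show "h \<otimes> inv h' \<in> N" .
  qed (use assms in auto)
  moreover have "N \<subseteq> M" using assms(3,4) unfolding fin_index_def by auto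
  ultimately show ?thesis unfolding fin_index_def by auto
qed

definition conj_preimage :: "'a \<Rightarrow> 'a set \<Rightarrow> 'a set" where
  "conj_preimage w K = {x \<in> carrier G. w \<otimes> x \<otimes> inv w \<in> K}"

lemma conj_preimage_subgroup:
  assumes "subgroup K G" "w \<in> carrier G"
  shows "subgroup (conj_preimage w K) G"
proof (rule subgroupI)
  show "conj_preimage w K \<subseteq> carrier G" unfolding conj_preimage_def by auto
  have "\<one> \<in> conj_preimage w K"
    using assms unfolding conj_preimage_def by (simp add: subgroup.one_closed)
  then show "conj_preimage w K \<noteq> {}" by blast
next
  fix a assume "a \<in> conj_preimage w K"
  then have a: "a \<in> carrier G" "w \<otimes> a \<otimes> inv w \<in> K" unfolding conj_preimage_def by auto
  have "w \<otimes> inv a \<otimes> inv w = inv (w \<otimes> a \<otimes> inv w)"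
    using a assms(2) by (simp add: inv_mult_group m_assoc)
  then show "inv a \<in> conj_preimage w K"
    using subgroup.m_inv_closed[OF assms(1) a(2)] a unfolding conj_preimage_def by simp
next
  fix a b assume "a \<in> conj_preimage w K" "b \<in> conj_preimage w K"
  then have ab: "a \<in> carrier G" "w \<otimes> a \<otimes> inv w \<in> K" "b \<in> carrier G" "w \<otimes> b \<otimes> inv w \<in> K"
    unfolding conj_preimage_def by auto
  have "w \<otimes> (a \<otimes> b) \<otimes> inv w = (w \<otimes> a \<otimes> inv w) \<otimes> (w \<otimes> b \<otimes> inv w)"
    using ab assms(2) by (simp add: m_assoc)
  then show "a \<otimes> b \<in> conj_preimage w K"
    using subgroup.m_closed[OF assms(1) ab(2) ab(4)] ab unfolding conj_preimage_def by simp
qed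

lemma definable_conj_preimage:
  assumes "definable G R K" "w \<in> carrier G"
  shows "definable G R (conj_preimage w K)"
  using definable_eval_gterm_preimage[of "GMult (GMult (GConst w) (GVar 0)) (GInv (GConst w))"] assms
  unfolding conj_preimage_def by simp

text \<open>If \<open>w\<close> conjugates \<open>Q\<close> into \<open>P\<close>, then conjugation by \<open>w\<close> maps cosets of the preimage of
  \<open>K\<close> in \<open>Q\<close> injectively to cosets of \<open>K\<close> in \<open>P\<close>.\<close>

lemma fin_index_conj_preimage:
  assumes "subgroup Q G" "subgroup K G" "fin_index G K P" "P \<subseteq> carrier G" "w \<in> carrier G"
    and "\<forall>q\<in>Q. w \<otimes> q \<otimes> inv w \<in> P"
  shows "fin_index G (Q \<inter> conj_preimage w K) Q"
proof -
  have Q: "Q \<subseteq> carrier G" using assms(1) subgroup.subset by blast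
  have "finite {(Q \<inter> conj_preimage w K) #> h | h. h \<in> Q}"
  proof (rule finite_rcosets_via_map[where F = "\<lambda>q. K #> (w \<otimes> q \<otimes> inv w)"])
    show "subgroup (Q \<inter> conj_preimage w K) G"
      using assms(1) conj_preimage_subgroup[OF assms(2,5)] by (rule subgroups_Inter_pair)
    have "(\<lambda>q. K #> (w \<otimes> q \<otimes> inv w)) ` Q \<subseteq> {K #> h | h. h \<in> P}"
      using assms(6) by blast
    then show "finite ((\<lambda>q. K #> (w \<otimes> q \<otimes> inv w)) ` Q)"
      using assms(3) unfolding fin_index_def by (blast intro: finite_subset)
    fix h h' assume h: "h \<in> Q" "h' \<in> Q" "K #> (w \<otimes> h \<otimes> inv w) = K #> (w \<otimes> h' \<otimes> inv w)"
    have hc: "h \<in> carrier G" "h' \<in> carrier G" using h Q by auto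
    have "(w \<otimes> h \<otimes> inv w) \<otimes> inv (w \<otimes> h' \<otimes> inv w) \<in> K"
      using h(3) rcos_eq_iff[OF assms(2)] hc assms(5) by simp
    also have "(w \<otimes> h \<otimes> inv w) \<otimes> inv (w \<otimes> h' \<otimes> inv w) = w \<otimes> (h \<otimes> inv h') \<otimes> inv w"
      using hc assms(5) by (simp add: inv_mult_group m_assoc)
    finally have "h \<otimes> inv h' \<in> conj_preimage w K"
      unfolding conj_preimage_def using hc by simp
    moreover have "h \<otimes> inv h' \<in> Q"
      using h assms(1) by (simp add: subgroup.m_closed subgroup.m_inv_closed)
    ultimately show "h \<otimes> inv h' \<in> Q \<inter> conj_preimage w K" by simp
  qed (rule Q)
  then show ?thesis unfolding fin_index_def by auto
qed

lemma normalizer_eq_conj_closed: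
  assumes "Q \<subseteq> carrier G"
  shows "normalizer G Q = {g \<in> carrier G. \<forall>x\<in>Q. g \<otimes> x \<otimes> inv g \<in> Q \<and> inv g \<otimes> x \<otimes> g \<in> Q}"
proof -
  have "g <# Q #> inv g = Q \<longleftrightarrow> (\<forall>x\<in>Q. g \<otimes> x \<otimes> inv g \<in> Q \<and> inv g \<otimes> x \<otimes> g \<in> Q)"
    if g: "g \<in> carrier G" for g
  proof
    assume eq: "g <# Q #> inv g = Q"
    have conj: "g \<otimes> x \<otimes> inv g \<in> g <# Q #> inv g" if "x \<in> Q" for x
      using that unfolding l_coset_def r_coset_def by auto
    show "\<forall>x\<in>Q. g \<otimes> x \<otimes> inv g \<in> Q \<and> inv g \<otimes> x \<otimes> g \<in> Q"
    proof
      fix x assume x: "x \<in> Q"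
      have "g \<otimes> x \<otimes> inv g \<in> Q" using conj[OF x] eq by simp
      moreover have "x \<in> g <# Q #> inv g" using x eq by simp
      then obtain y where "y \<in> Q" "x = g \<otimes> y \<otimes> inv g" unfolding l_coset_def r_coset_def by auto
      then have "inv g \<otimes> x \<otimes> g \<in> Q" using g assms by (auto simp: m_assoc)
      ultimately show "g \<otimes> x \<otimes> inv g \<in> Q \<and> inv g \<otimes> x \<otimes> g \<in> Q" by simp
    qed
  next
    assume closed: "\<forall>x\<in>Q. g \<otimes> x \<otimes> inv g \<in> Q \<and> inv g \<otimes> x \<otimes> g \<in> Q"
    show "g <# Q #> inv g = Q"
    proof
      show "g <# Q #> inv g \<subseteq> Q" using closed unfolding l_coset_def r_coset_def by auto
      show "Q \<subseteq> g <# Q #> inv g"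
      proof
        fix x assume x: "x \<in> Q"
        then have "inv g \<otimes> x \<otimes> g \<in> Q" using closed by simp
        moreover have "x = g \<otimes> (inv g \<otimes> x \<otimes> g) \<otimes> inv g" using x g assms by (auto simp: m_assoc)
        ultimately show "x \<in> g <# Q #> inv g" unfolding l_coset_def r_coset_def by auto
      qed
    qed
  qed
  then show ?thesis unfolding normalizer_def stabilizer_def using assms by auto
qed

lemma definable_normalizer:
  assumes "definable G R D"
  shows "definable G R (normalizer G D)"
proof -
  have D: "D \<subseteq> carrier G" using assms unfolding definable_def by auto
  define conj :: "'a gterm" where "conj = GMult (GMult (GVar 0) (GVar 1)) (GInv (GVar 0))"
  define conj' :: "'a gterm" where "conj' = GMult (GMult (GInv (GVar 0)) (GVar 1)) (GVar 0)"
  have "definable_pred G R (\<lambda>e. \<not> (e 1 \<in> D \<and> \<not> (eval_gterm G e conj \<in> D \<and> eval_gterm G e conj' \<in> D)))"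
    unfolding conj_def conj'_def
    by (intro definable_pred_Not definable_pred_conj definable_pred_mem definable_pred_eval_gterm_mem assms) auto
  then have "definable_pred G R (\<lambda>e. \<forall>x\<in>D. e 0 \<otimes> x \<otimes> inv (e 0) \<in> D \<and> inv (e 0) \<otimes> x \<otimes> e 0 \<in> D)"
    by (rule definable_pred_ball[where k = 1]) (use D in \<open>auto simp: conj_def conj'_def\<close>)
  then have "definable G R {g \<in> carrier G. \<forall>x\<in>D. g \<otimes> x \<otimes> inv g \<in> D \<and> inv g \<otimes> x \<otimes> g \<in> D}"
    by (rule definableI)
  then show ?thesis using normalizer_eq_conj_closed[OF D] by simp
qed

lemma mem_normalizer_iff:
  "Q \<subseteq> carrier G \<Longrightarrow> g \<in> normalizer G Q \<longleftrightarrow>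
    g \<in> carrier G \<and> (\<forall>x\<in>Q. g \<otimes> x \<otimes> inv g \<in> Q \<and> inv g \<otimes> x \<otimes> g \<in> Q)"
  by (simp add: normalizer_eq_conj_closed)

lemma subgroup_subset_normalizer: "subgroup H G \<Longrightarrow> H \<subseteq> normalizer G H"
  using subgroup.subset[of H G]
  by (auto simp: mem_normalizer_iff subgroup.m_closed subgroup.m_inv_closed)

text \<open>A subgroup between \<open>Q\<close> and \<open>M\<close> is the union of the cosets of \<open>Q\<close> it contains, so it is
  determined by a subset of the finitely many cosets of \<open>Q\<close> in \<open>M\<close>.\<close>

lemma finite_intermediate_subgroups:
  assumes "subgroup Q G" "fin_index G Q M"
  shows "finite {K. subgroup K G \<and> Q \<subseteq> K \<and> K \<subseteq> M}"
proof -
  let ?F = "{K. subgroup K G \<and> Q \<subseteq> K \<and> K \<subseteq> M}"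
  define cosets where "cosets K = {Q #> k | k. k \<in> K}" for K
  have union: "K = \<Union> (cosets K)" if "K \<in> ?F" for K
  proof
    show "K \<subseteq> \<Union> (cosets K)"
      using that rcos_self[OF _ assms(1)] subgroup.subset unfolding cosets_def by blast
    show "\<Union> (cosets K) \<subseteq> K"
      using that unfolding cosets_def r_coset_def by (auto intro: subgroup.m_closed)
  qed
  have "inj_on cosets ?F"
    by (rule inj_onI) (metis union)
  moreover have "cosets ` ?F \<subseteq> Pow (cosets M)"
    unfolding cosets_def by blast
  moreover have "finite (cosets M)"
    using assms(2) unfolding fin_index_def cosets_def by simp
  ultimately show ?thesis
    by (meson finite_Pow_iff finite_imageD finite_subset)
qed

section \<open>Commutators and the lower central series\<close>

abbreviation commutator :: "'a \<Rightarrow> 'a \<Rightarrow> 'a" where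
  "commutator x y \<equiv> x \<otimes> y \<otimes> inv x \<otimes> inv y"

lemma lcs_subgroup: "subgroup H G \<Longrightarrow> subgroup (lcs G H n) G \<and> lcs G H n \<subseteq> H"
proof (induction n)
  case (Suc n)
  let ?S = "{commutator x y | x y. x \<in> lcs G H n \<and> y \<in> H}"
  have "?S \<subseteq> H"
    using Suc subgroup.subset[OF Suc.prems] by (auto intro!: subgroup.m_closed subgroup.m_inv_closed)
  then show ?case
    using generate_is_subgroup generate_subgroup_incl Suc.prems subgroup.subset[OF Suc.prems] by simp
qed simp

lemma one_in_lcs: "subgroup H G \<Longrightarrow> \<one> \<in> lcs G H n"
  using lcs_subgroup subgroup.one_closed by blast

lemma commutator_in_lcs: "x \<in> lcs G H n \<Longrightarrow> y \<in> H \<Longrightarrow> commutator x y \<in> lcs G H (Suc n)"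
  by (auto intro: generate.incl)

lemma lcs_mono: "A \<subseteq> B \<Longrightarrow> lcs G A n \<subseteq> lcs G B n"
proof (induction n)
  case (Suc n)
  then show ?case by (simp, intro mono_generate) blast
qed simp

lemma generate_conj_closed:
  assumes "S \<subseteq> carrier G" "g \<in> carrier G" "\<And>s. s \<in> S \<Longrightarrow> g \<otimes> s \<otimes> inv g \<in> S"
    and "z \<in> generate G S"
  shows "g \<otimes> z \<otimes> inv g \<in> generate G S"
  using assms(4)
proof induction
  case one
  then show ?case using assms(2) by (simp add: generate.one)
next
  case (incl h)
  then show ?case using assms(3) by (simp add: generate.incl)
next
  case (inv h)
  have "g \<otimes> inv h \<otimes> inv g = inv (g \<otimes> h \<otimes> inv g)"
    using inv assms by (auto simp: inv_mult_group m_assoc)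
  then show ?case using assms(3)[OF inv] by (simp add: generate.inv)
next
  case (eng h1 h2)
  have "h1 \<in> carrier G" "h2 \<in> carrier G"
    using eng.hyps generate_in_carrier assms(1) by auto
  then have "g \<otimes> (h1 \<otimes> h2) \<otimes> inv g = (g \<otimes> h1 \<otimes> inv g) \<otimes> (g \<otimes> h2 \<otimes> inv g)"
    using assms(2) by (simp add: m_assoc)
  then show ?case using eng.IH by (simp add: generate.eng)
qed

lemma commutator_conj:
  "g \<in> carrier G \<Longrightarrow> x \<in> carrier G \<Longrightarrow> y \<in> carrier G \<Longrightarrow>
    g \<otimes> commutator x y \<otimes> inv g = commutator (g \<otimes> x \<otimes> inv g) (g \<otimes> y \<otimes> inv g)"
  by (simp add: inv_mult_group m_assoc)

lemma lcs_conj_closed: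
  "subgroup H G \<Longrightarrow> g \<in> H \<Longrightarrow> x \<in> lcs G H n \<Longrightarrow> g \<otimes> x \<otimes> inv g \<in> lcs G H n"
proof (induction n arbitrary: x)
  case 0
  then show ?case by (simp add: subgroup.m_closed subgroup.m_inv_closed)
next
  case (Suc n)
  let ?S = "{commutator x y | x y. x \<in> lcs G H n \<and> y \<in> H}"
  have H: "H \<subseteq> carrier G" and L: "lcs G H n \<subseteq> carrier G"
    using lcs_subgroup[OF Suc.prems(1)] subgroup.subset[OF Suc.prems(1)] by blast+
  have g: "g \<in> carrier G" using Suc.prems H by auto
  have S_closed: "g \<otimes> s \<otimes> inv g \<in> ?S" if "s \<in> ?S" for s
  proof -
    obtain x y where s: "s = commutator x y" "x \<in> lcs G H n" "y \<in> H" using \<open>s \<in> ?S\<close> by blast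
    have "g \<otimes> x \<otimes> inv g \<in> lcs G H n" using Suc s by blast
    moreover have "g \<otimes> y \<otimes> inv g \<in> H"
      using Suc.prems s by (simp add: subgroup.m_closed subgroup.m_inv_closed)
    ultimately show ?thesis
      unfolding s(1) using commutator_conj g s H L by blast
  qed
  have "?S \<subseteq> carrier G" using H L by blast
  from generate_conj_closed[OF this g S_closed] show ?case
    using Suc.prems(3) by simp
qed

lemma commutator_left_preimage_subgroup:
  assumes D: "subgroup D G" and N: "subgroup N G"
    and normalizes: "\<And>g d. g \<in> N \<Longrightarrow> d \<in> D \<Longrightarrow> g \<otimes> d \<otimes> inv g \<in> D"
    and b: "b \<in> carrier G"
  shows "subgroup {x \<in> N. commutator x b \<in> D} G"
proof (rule subgroupI)
  show "{x \<in> N. commutator x b \<in> D} \<subseteq> carrier G" using subgroup.subset[OF N] by blast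
  have "\<one> \<in> {x \<in> N. commutator x b \<in> D}" using N D b by (simp add: subgroup.one_closed)
  then show "{x \<in> N. commutator x b \<in> D} \<noteq> {}" by blast
next
  fix a assume a: "a \<in> {x \<in> N. commutator x b \<in> D}"
  then have "a \<in> carrier G" "inv a \<in> N" using N by (auto simp: subgroup.m_inv_closed subgroup.mem_carrier)
  moreover have "commutator (inv a) b = inv a \<otimes> inv (commutator a b) \<otimes> inv (inv a)"
    using calculation b by (simp add: inv_mult_group m_assoc)
  ultimately show "inv a \<in> {x \<in> N. commutator x b \<in> D}"
    using a normalizes[OF \<open>inv a \<in> N\<close>] D by (simp add: subgroup.m_inv_closed)
next
  fix a a' assume a: "a \<in> {x \<in> N. commutator x b \<in> D}" "a' \<in> {x \<in> N. commutator x b \<in> D}"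
  then have "a \<in> carrier G" "a' \<in> carrier G" using N subgroup.subset by blast+
  then have "commutator (a \<otimes> a') b = (a \<otimes> commutator a' b \<otimes> inv a) \<otimes> commutator a b"
    using b by (simp add: inv_mult_group m_assoc)
  then show "a \<otimes> a' \<in> {x \<in> N. commutator x b \<in> D}"
    using a normalizes D N by (simp add: subgroup.m_closed)
qed

lemma commutator_right_preimage_subgroup:
  assumes D: "subgroup D G" and N: "subgroup N G"
    and normalizes: "\<And>g d. g \<in> N \<Longrightarrow> d \<in> D \<Longrightarrow> g \<otimes> d \<otimes> inv g \<in> D"
    and x: "x \<in> carrier G"
  shows "subgroup {y \<in> N. commutator x y \<in> D} G"
proof (rule subgroupI)
  show "{y \<in> N. commutator x y \<in> D} \<subseteq> carrier G" using subgroup.subset[OF N] by blast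
  have "\<one> \<in> {y \<in> N. commutator x y \<in> D}" using N D x by (simp add: subgroup.one_closed)
  then show "{y \<in> N. commutator x y \<in> D} \<noteq> {}" by blast
next
  fix a assume a: "a \<in> {y \<in> N. commutator x y \<in> D}"
  then have "a \<in> carrier G" "inv a \<in> N" using N by (auto simp: subgroup.m_inv_closed subgroup.mem_carrier)
  moreover have "commutator x (inv a) = inv a \<otimes> inv (commutator x a) \<otimes> inv (inv a)"
    using calculation x by (simp add: inv_mult_group m_assoc)
  ultimately show "inv a \<in> {y \<in> N. commutator x y \<in> D}"
    using a normalizes[OF \<open>inv a \<in> N\<close>] D by (simp add: subgroup.m_inv_closed)
next
  fix a a' assume a: "a \<in> {y \<in> N. commutator x y \<in> D}" "a' \<in> {y \<in> N. commutator x y \<in> D}"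
  then have "a \<in> carrier G" "a' \<in> carrier G" using N subgroup.subset by blast+
  then have "commutator x (a \<otimes> a') = commutator x a \<otimes> (a \<otimes> commutator x a' \<otimes> inv a)"
    using x by (simp add: inv_mult_group m_assoc)
  then show "a \<otimes> a' \<in> {y \<in> N. commutator x y \<in> D}"
    using a normalizes D N by (simp add: subgroup.m_closed)
qed

lemma subgroup_subset_normalizer_lcs:
  assumes "subgroup H G"
  shows "H \<subseteq> normalizer G (lcs G H n)"
proof
  fix g assume g: "g \<in> H"
  then have "g \<in> carrier G" "inv g \<in> H"
    using assms subgroup.subset by (auto simp: subgroup.m_inv_closed)
  moreover have "lcs G H n \<subseteq> carrier G"
    using lcs_subgroup[OF assms] subgroup.subset[OF assms] by blast
  ultimately show "g \<in> normalizer G (lcs G H n)"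
    using lcs_conj_closed[OF assms g] lcs_conj_closed[OF assms \<open>inv g \<in> H\<close>]
    by (simp add: mem_normalizer_iff)
qed

lemma nilpotent_subgroup_subset:
  assumes "nilpotent_subgroup G H" "subgroup K G" "K \<subseteq> H"
  shows "nilpotent_subgroup G K"
proof -
  obtain c where "lcs G H c = {\<one>}" using assms(1) unfolding nilpotent_subgroup_def by blast
  then have "lcs G K c = {\<one>}" using lcs_mono[OF assms(3), of c] one_in_lcs[OF assms(2)] by blast
  then show ?thesis unfolding nilpotent_subgroup_def using assms(2) by blast
qed

lemma lcs_subset_normalizer_lcs_Suc: "subgroup H G \<Longrightarrow> lcs G H n \<subseteq> normalizer G (lcs G H (Suc n))"
  using subgroup_subset_normalizer_lcs lcs_subgroup by blast

lemma def_subgroup_subgroup: "def_subgroup G R H \<Longrightarrow> subgroup H G"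
  unfolding def_subgroup_def by simp

lemma def_subgroup_subset: "def_subgroup G R H \<Longrightarrow> H \<subseteq> carrier G"
  unfolding def_subgroup_def using subgroup.subset by blast

lemma def_subgroup_Int: "def_subgroup G R A \<Longrightarrow> def_subgroup G R B \<Longrightarrow> def_subgroup G R (A \<inter> B)"
  unfolding def_subgroup_def using subgroups_Inter_pair definable_Int by blast

lemma def_subgroup_carrier: "def_subgroup G R (carrier G)"
  unfolding def_subgroup_def using subgroup_self definable_carrier by simp

lemma def_subgroup_one: "def_subgroup G R {\<one>}"
  unfolding def_subgroup_def using triv_subgroup definable_one by simp

lemma def_subgroup_normalizer: "def_subgroup G R D \<Longrightarrow> def_subgroup G R (normalizer G D)"
  unfolding def_subgroup_def
  using definable_normalizer normalizer_imp_subgroup subgroup.subset by blast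

lemma def_subgroup_conj_preimage:
  "def_subgroup G R K \<Longrightarrow> w \<in> carrier G \<Longrightarrow> def_subgroup G R (conj_preimage w K)"
  unfolding def_subgroup_def using conj_preimage_subgroup definable_conj_preimage by blast

lemma def_subgroup_commutator_left_preimage:
  assumes D: "def_subgroup G R D" and N: "def_subgroup G R N" "N \<subseteq> normalizer G D"
    and b: "b \<in> carrier G"
  shows "def_subgroup G R {x \<in> N. commutator x b \<in> D}"
proof -
  let ?t = "GMult (GMult (GMult (GVar 0) (GConst b)) (GInv (GVar 0))) (GInv (GConst b))"
  have "{x \<in> N. commutator x b \<in> D} = N \<inter> {x \<in> carrier G. eval_gterm G (\<lambda>_. x) ?t \<in> D}"
    using def_subgroup_subset[OF N(1)] by auto
  moreover have "definable G R (N \<inter> {x \<in> carrier G. eval_gterm G (\<lambda>_. x) ?t \<in> D})"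
    using D N(1) b unfolding def_subgroup_def by (intro definable_Int definable_eval_gterm_preimage) auto
  moreover have "subgroup {x \<in> N. commutator x b \<in> D} G"
    using commutator_left_preimage_subgroup[OF def_subgroup_subgroup[OF D] def_subgroup_subgroup[OF N(1)] _ b]
      N(2) mem_normalizer_iff[OF def_subgroup_subset[OF D]] by blast
  ultimately show ?thesis unfolding def_subgroup_def by simp
qed

lemma def_subgroup_commutator_right_preimage:
  assumes D: "def_subgroup G R D" and N: "def_subgroup G R N" "N \<subseteq> normalizer G D"
    and x: "x \<in> carrier G"
  shows "def_subgroup G R {y \<in> N. commutator x y \<in> D}"
proof -
  let ?t = "GMult (GMult (GMult (GConst x) (GVar 0)) (GInv (GConst x))) (GInv (GVar 0))"
  have "{y \<in> N. commutator x y \<in> D} = N \<inter> {y \<in> carrier G. eval_gterm G (\<lambda>_. y) ?t \<in> D}"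
    using def_subgroup_subset[OF N(1)] by auto
  moreover have "definable G R (N \<inter> {y \<in> carrier G. eval_gterm G (\<lambda>_. y) ?t \<in> D})"
    using D N(1) x unfolding def_subgroup_def by (intro definable_Int definable_eval_gterm_preimage) auto
  moreover have "subgroup {y \<in> N. commutator x y \<in> D} G"
    using commutator_right_preimage_subgroup[OF def_subgroup_subgroup[OF D] def_subgroup_subgroup[OF N(1)] _ x]
      N(2) mem_normalizer_iff[OF def_subgroup_subset[OF D]] by blast
  ultimately show ?thesis unfolding def_subgroup_def by simp
qed

end

section \<open>Groups with the descending chain condition\<close>

definition def_hull :: "('a, 'b) monoid_scheme \<Rightarrow> ('r \<Rightarrow> 'a list set) \<Rightarrow> 'a set \<Rightarrow> 'a set" where
  "def_hull G R S = \<Inter> {D. def_subgroup G R D \<and> S \<subseteq> D}"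

lemma subset_def_hull: "S \<subseteq> def_hull G R S"
  unfolding def_hull_def by blast

lemma def_hull_least: "def_subgroup G R D \<Longrightarrow> S \<subseteq> D \<Longrightarrow> def_hull G R S \<subseteq> D"
  unfolding def_hull_def by blast

lemma conn_comp_least: "def_subgroup G R K \<Longrightarrow> fin_index G K Q \<Longrightarrow> conn_comp G R Q \<subseteq> K"
  unfolding conn_comp_def by blast

lemma nilpotent_subgroup_subgroup: "nilpotent_subgroup G H \<Longrightarrow> subgroup H G"
  unfolding nilpotent_subgroup_def by simp

locale dcc_group = group +
  fixes R :: "'r \<Rightarrow> 'a list set"
  assumes dcc: "dcc G R"
begin

lemma ex_minimal_def_subgroup:
  assumes "F \<noteq> {}" "\<And>K. K \<in> F \<Longrightarrow> def_subgroup G R K"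
  shows "\<exists>M\<in>F. \<forall>K\<in>F. \<not> K \<subset> M"
proof (rule ccontr)
  assume "\<not> ?thesis"
  then obtain smaller where smaller: "\<And>M. M \<in> F \<Longrightarrow> smaller M \<in> F \<and> smaller M \<subset> M"
    by metis
  obtain M0 where "M0 \<in> F" using assms(1) by blast
  define chain where "chain n = (smaller ^^ n) M0" for n
  have chain_in: "chain n \<in> F" for n
    unfolding chain_def by (induction n) (use \<open>M0 \<in> F\<close> smaller in auto)
  have "\<forall>n. def_subgroup G R (chain n) \<and> chain (Suc n) \<subset> chain n"
    using assms(2)[OF chain_in] smaller[OF chain_in] unfolding chain_def by simp
  then show False using dcc unfolding dcc_def by blast
qed

lemma Inter_def_subgroups_mem:
  assumes "F \<noteq> {}" "\<And>K. K \<in> F \<Longrightarrow> def_subgroup G R K" "\<And>K L. K \<in> F \<Longrightarrow> L \<in> F \<Longrightarrow> K \<inter> L \<in> F"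
  shows "\<Inter> F \<in> F"
proof -
  obtain M where M: "M \<in> F" "\<forall>K\<in>F. \<not> K \<subset> M"
    using ex_minimal_def_subgroup[OF assms(1,2)] by blast
  have "M \<subseteq> K" if "K \<in> F" for K
    using M assms(3)[OF M(1) that] by blast
  then have "\<Inter> F = M" using M(1) by blast
  then show ?thesis using M(1) by simp
qed

lemma def_subgroup_def_hull:
  assumes "S \<subseteq> carrier G"
  shows "def_subgroup G R (def_hull G R S)"
proof -
  have "\<Inter> {D. def_subgroup G R D \<and> S \<subseteq> D} \<in> {D. def_subgroup G R D \<and> S \<subseteq> D}"
    using assms def_subgroup_carrier def_subgroup_Int by (intro Inter_def_subgroups_mem) auto
  then show ?thesis unfolding def_hull_def by simp
qed

lemma def_subgroup_fin_index_conn_comp: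
  assumes "def_subgroup G R Q"
  shows "def_subgroup G R (conn_comp G R Q) \<and> fin_index G (conn_comp G R Q) Q"
proof -
  have Q: "subgroup Q G" "Q \<subseteq> carrier G"
    using def_subgroup_subgroup[OF assms] def_subgroup_subset[OF assms] by auto
  have "\<Inter> {K. def_subgroup G R K \<and> fin_index G K Q} \<in> {K. def_subgroup G R K \<and> fin_index G K Q}"
  proof (rule Inter_def_subgroups_mem)
    show "{K. def_subgroup G R K \<and> fin_index G K Q} \<noteq> {}"
      using assms fin_index_refl[OF Q(1)] by blast
  next
    fix K L assume "K \<in> {K. def_subgroup G R K \<and> fin_index G K Q}" "L \<in> {K. def_subgroup G R K \<and> fin_index G K Q}"
    then show "K \<inter> L \<in> {K. def_subgroup G R K \<and> fin_index G K Q}"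
      using fin_index_Int[OF def_subgroup_subgroup def_subgroup_subgroup _ _ Q(2)] def_subgroup_Int by auto
  qed simp
  then show ?thesis unfolding conn_comp_def by simp
qed

lemma def_subgroup_conn_comp: "def_subgroup G R Q \<Longrightarrow> def_subgroup G R (conn_comp G R Q)"
  using def_subgroup_fin_index_conn_comp by blast

lemma fin_index_conn_comp: "def_subgroup G R Q \<Longrightarrow> fin_index G (conn_comp G R Q) Q"
  using def_subgroup_fin_index_conn_comp by blast

lemma conn_comp_idem:
  assumes "def_subgroup G R Q"
  shows "conn_comp G R (conn_comp G R Q) = conn_comp G R Q"
proof
  let ?P = "conn_comp G R Q"
  have P: "def_subgroup G R ?P" "fin_index G ?P Q"
    using assms by (simp_all add: def_subgroup_conn_comp fin_index_conn_comp)
  show "conn_comp G R ?P \<subseteq> ?P"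
    using conn_comp_least[OF P(1) fin_index_refl[OF def_subgroup_subgroup[OF P(1)]]] .
  have "?P \<subseteq> K" if K: "def_subgroup G R K" "fin_index G K ?P" for K
    using fin_index_trans[OF def_subgroup_subgroup[OF K(1)] def_subgroup_subgroup[OF P(1)] K(2) P(2)]
      conn_comp_least[OF K(1)] def_subgroup_subset[OF assms] by blast
  then show "?P \<subseteq> conn_comp G R ?P" unfolding conn_comp_def by blast
qed

lemma connected_subset_if_fin_index:
  assumes "def_subgroup G R Q" "conn_comp G R Q = Q" "def_subgroup G R K" "fin_index G (Q \<inter> K) Q"
  shows "Q \<subseteq> K"
  using conn_comp_least[OF def_subgroup_Int[OF assms(1,3)] assms(4)] assms(2) by blast

lemma conn_comp_eq_if_fin_index:
  assumes "def_subgroup G R Q" "conn_comp G R Q = Q" "fin_index G Q Q'"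
  shows "conn_comp G R Q' = Q"
proof
  show "conn_comp G R Q' \<subseteq> Q" using conn_comp_least[OF assms(1,3)] .
  have "Q \<subseteq> K" if K: "def_subgroup G R K" "fin_index G K Q'" for K
  proof -
    have "Q \<subseteq> Q'" using assms(3) unfolding fin_index_def by simp
    then have "fin_index G (K \<inter> Q) Q"
      using fin_index_Int_subgroup K def_subgroup_subgroup assms(1) by blast
    then show ?thesis
      using connected_subset_if_fin_index[OF assms(1,2) K(1)] by (simp add: Int_commute)
  qed
  then show "Q \<subseteq> conn_comp G R Q'" unfolding conn_comp_def by blast
qed

text \<open>Rigidity of a connected definable \<open>Q\<close> of finite index in \<open>N(Q)\<close>: the preimage of \<open>Q\<close>
  under conjugation into \<open>N(Q)\<close> has finite index in \<open>Q\<close>, so by connectedness it is all of \<open>Q\<close>.\<close>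

lemma conj_into_normalizer_imp_conj_into:
  assumes "def_subgroup G R Q" "conn_comp G R Q = Q" "fin_index G Q (normalizer G Q)"
    and "w \<in> carrier G" "\<forall>q\<in>Q. w \<otimes> q \<otimes> inv w \<in> normalizer G Q"
  shows "\<forall>q\<in>Q. w \<otimes> q \<otimes> inv w \<in> Q"
proof -
  have Q: "subgroup Q G" "Q \<subseteq> carrier G"
    using def_subgroup_subgroup[OF assms(1)] def_subgroup_subset[OF assms(1)] by auto
  have "normalizer G Q \<subseteq> carrier G"
    using normalizer_imp_subgroup[OF Q(2)] subgroup.subset by blast
  then have "fin_index G (Q \<inter> conj_preimage w Q) Q"
    using fin_index_conj_preimage[OF Q(1) Q(1) assms(3) _ assms(4,5)] by blast
  then have "Q \<subseteq> conj_preimage w Q"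
    using connected_subset_if_fin_index[OF assms(1,2)] def_subgroup_conj_preimage[OF assms(1,4)] by blast
  then show ?thesis unfolding conj_preimage_def by blast
qed

lemma def_hull_conj_closed:
  assumes "C \<subseteq> carrier G" "g \<in> carrier G" "\<forall>c\<in>C. g \<otimes> c \<otimes> inv g \<in> C"
  shows "\<forall>x\<in>def_hull G R C. g \<otimes> x \<otimes> inv g \<in> def_hull G R C"
proof -
  let ?D = "def_hull G R C"
  have "def_subgroup G R (?D \<inter> conj_preimage g ?D)"
    using def_subgroup_def_hull[OF assms(1)] assms(2)
    by (intro def_subgroup_Int def_subgroup_conj_preimage)
  moreover have "C \<subseteq> ?D \<inter> conj_preimage g ?D"
    using subset_def_hull[of C G R] assms unfolding conj_preimage_def by blast
  ultimately have "?D \<subseteq> conj_preimage g ?D" using def_hull_least by blast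
  then show ?thesis unfolding conj_preimage_def by blast
qed

lemma normalizer_subset_normalizer_def_hull:
  assumes "C \<subseteq> carrier G"
  shows "normalizer G C \<subseteq> normalizer G (def_hull G R C)"
proof
  fix g assume "g \<in> normalizer G C"
  then have g: "g \<in> carrier G" "\<forall>c\<in>C. g \<otimes> c \<otimes> inv g \<in> C" "\<forall>c\<in>C. inv g \<otimes> c \<otimes> inv (inv g) \<in> C"
    using mem_normalizer_iff[OF assms] by auto
  show "g \<in> normalizer G (def_hull G R C)"
    using def_hull_conj_closed[OF assms g(1,2)] def_hull_conj_closed[OF assms _ g(3)] g(1)
      def_subgroup_subset[OF def_subgroup_def_hull[OF assms]]
    by (simp add: mem_normalizer_iff)
qed

text \<open>Since \<open>A\<close> and \<open>B\<close> normalise the hull of \<open>C\<close>, commutation with a fixed element sends a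
  definable subgroup into that hull; enlarging first the left and then the right argument
  replaces \<open>A\<close> and \<open>B\<close> by their hulls.\<close>

lemma commutator_def_hull:
  assumes A: "subgroup A G" and B: "subgroup B G" and C: "C \<subseteq> carrier G"
    and comm: "\<And>a b. a \<in> A \<Longrightarrow> b \<in> B \<Longrightarrow> commutator a b \<in> C"
    and "A \<subseteq> normalizer G C" "B \<subseteq> normalizer G C"
    and x: "x \<in> def_hull G R A" and y: "y \<in> def_hull G R B"
  shows "commutator x y \<in> def_hull G R C"
proof -
  let ?D = "def_hull G R C"
  let ?N = "normalizer G ?D"
  have D: "def_subgroup G R ?D" using def_subgroup_def_hull[OF C] .
  have N: "def_subgroup G R ?N" using def_subgroup_normalizer[OF D] .
  have AN: "A \<subseteq> ?N" and BN: "B \<subseteq> ?N"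
    using assms(5,6) normalizer_subset_normalizer_def_hull[OF C] by blast+
  have left: "def_hull G R A \<subseteq> {x \<in> ?N. commutator x b \<in> ?D}" if "b \<in> B" for b
  proof (rule def_hull_least)
    show "def_subgroup G R {x \<in> ?N. commutator x b \<in> ?D}"
      using def_subgroup_commutator_left_preimage[OF D N subset_refl] that subgroup.subset[OF B] by blast
    show "A \<subseteq> {x \<in> ?N. commutator x b \<in> ?D}"
      using AN comm that subset_def_hull[of C G R] by blast
  qed
  have "def_hull G R B \<subseteq> {y \<in> ?N. commutator x y \<in> ?D}"
  proof (rule def_hull_least)
    show "def_subgroup G R {y \<in> ?N. commutator x y \<in> ?D}"
      using def_subgroup_commutator_right_preimage[OF D N subset_refl] x
        def_subgroup_subset[OF def_subgroup_def_hull[OF subgroup.subset[OF A]]] by blast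
    show "B \<subseteq> {y \<in> ?N. commutator x y \<in> ?D}"
      using BN left x by blast
  qed
  then show ?thesis using y by blast
qed

lemma nilpotent_def_hull:
  assumes "nilpotent_subgroup G H"
  shows "nilpotent_subgroup G (def_hull G R H)"
proof -
  have H: "subgroup H G" using nilpotent_subgroup_subgroup[OF assms] .
  then have H_carrier: "H \<subseteq> carrier G" by (rule subgroup.subset)
  have hull: "subgroup (def_hull G R H) G"
    using def_subgroup_subgroup[OF def_subgroup_def_hull[OF H_carrier]] .
  have lcs_hull: "lcs G (def_hull G R H) n \<subseteq> def_hull G R (lcs G H n)" for n
  proof (induction n)
    case (Suc n)
    have L: "subgroup (lcs G H n) G" "lcs G H (Suc n) \<subseteq> carrier G"
      using lcs_subgroup[OF H] H_carrier by blast+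
    have "commutator x y \<in> def_hull G R (lcs G H (Suc n))"
      if "x \<in> def_hull G R (lcs G H n)" "y \<in> def_hull G R H" for x y
      using commutator_def_hull[OF L(1) H L(2) commutator_in_lcs _ _ that]
        lcs_subset_normalizer_lcs_Suc[OF H] subgroup_subset_normalizer_lcs[OF H] by blast
    then have "{commutator x y | x y. x \<in> lcs G (def_hull G R H) n \<and> y \<in> def_hull G R H}
        \<subseteq> def_hull G R (lcs G H (Suc n))"
      using Suc.IH by blast
    then show ?case
      using generate_subgroup_incl def_subgroup_subgroup[OF def_subgroup_def_hull[OF L(2)]] by simp
  qed simp
  obtain c where c: "lcs G H c = {\<one>}"
    using assms unfolding nilpotent_subgroup_def by blast
  have "lcs G (def_hull G R H) c \<subseteq> def_hull G R {\<one>}"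
    using lcs_hull[of c] by (simp add: c)
  also have "\<dots> \<subseteq> {\<one>}"
    by (rule def_hull_least[OF def_subgroup_one]) simp
  finally have "lcs G (def_hull G R H) c = {\<one>}"
    using one_in_lcs[OF hull] by blast
  then show ?thesis unfolding nilpotent_subgroup_def using hull by blast
qed

lemma max_nilpotent_def_subgroup:
  assumes "max_nilpotent G H"
  shows "def_subgroup G R H"
proof -
  have H: "nilpotent_subgroup G H" using assms unfolding max_nilpotent_def by simp
  have H_carrier: "H \<subseteq> carrier G" using subgroup.subset[OF nilpotent_subgroup_subgroup[OF H]] .
  have "def_hull G R H = H"
    using assms nilpotent_def_hull[OF H] subset_def_hull[of H G R] unfolding max_nilpotent_def by blast
  then show ?thesis using def_subgroup_def_hull[OF H_carrier] by simp
qed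

text \<open>Descending along the lower central series of \<open>K\<close>: if \<open>K\<^sub>n\<^sub>+\<^sub>1 \<le> N(Q)\<close>, every \<open>w \<in> K\<^sub>n\<close>
  conjugates \<open>q \<in> Q\<close> to \<open>[w, q] q \<in> N(Q)\<close>, hence into \<open>Q\<close>, so \<open>K\<^sub>n \<le> N(Q)\<close>.\<close>

lemma carter_nilpotent_overgroup_subset_normalizer:
  assumes "carter G R Q" "nilpotent_subgroup G K" "Q \<subseteq> K"
  shows "K \<subseteq> normalizer G Q"
proof -
  have Q: "def_subgroup G R Q" "conn_comp G R Q = Q" "fin_index G Q (normalizer G Q)"
    using assms(1) unfolding carter_def by auto
  have Q_carrier: "Q \<subseteq> carrier G" using def_subgroup_subset[OF Q(1)] .
  have Q_normalizer: "Q \<subseteq> normalizer G Q" using Q(3) unfolding fin_index_def by simp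
  have M: "subgroup (normalizer G Q) G" using normalizer_imp_subgroup[OF Q_carrier] .
  have K: "subgroup K G" using nilpotent_subgroup_subgroup[OF assms(2)] .
  have step: "lcs G K n \<subseteq> normalizer G Q" if IH: "lcs G K (Suc n) \<subseteq> normalizer G Q" for n
  proof -
    have conj: "\<forall>q\<in>Q. w \<otimes> q \<otimes> inv w \<in> Q" if w: "w \<in> lcs G K n" for w
    proof -
      have wc: "w \<in> carrier G" using w lcs_subgroup[OF K] subgroup.subset[OF K] by blast
      have "w \<otimes> q \<otimes> inv w \<in> normalizer G Q" if q: "q \<in> Q" for q
      proof -
        have "commutator w q \<in> normalizer G Q" using IH commutator_in_lcs[OF w] q assms(3) by blast
        then have "commutator w q \<otimes> q \<in> normalizer G Q"
          using q Q_normalizer M by (simp add: subgroup.m_closed subsetD)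
        moreover have "q \<in> carrier G" using q Q_carrier by blast
        then have "commutator w q \<otimes> q = w \<otimes> q \<otimes> inv w" using wc by (simp add: m_assoc)
        ultimately show ?thesis by simp
      qed
      then show ?thesis using conj_into_normalizer_imp_conj_into[OF Q wc] by blast
    qed
    show ?thesis
    proof
      fix z assume z: "z \<in> lcs G K n"
      then have "z \<in> carrier G" "inv z \<in> lcs G K n"
        using lcs_subgroup[OF K] subgroup.subset[OF K] by (auto simp: subgroup.m_inv_closed)
      then show "z \<in> normalizer G Q"
        using conj[OF z] conj[of "inv z"] by (simp add: mem_normalizer_iff[OF Q_carrier])
    qed
  qed
  obtain c where "lcs G K c = {\<one>}" using assms(2) unfolding nilpotent_subgroup_def by blast
  then have "lcs G K c \<subseteq> normalizer G Q" using M subgroup.one_closed by simp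
  then have "lcs G K 0 \<subseteq> normalizer G Q"
    by (rule inc_induct[of 0 c "\<lambda>n. lcs G K n \<subseteq> normalizer G Q", OF le0]) (rule step)
  then show ?thesis by simp
qed

lemma conn_comp_normal:
  assumes "def_subgroup G R Q"
  shows "conn_comp G R Q \<lhd> G\<lparr>carrier := Q\<rparr>"
proof -
  let ?P = "conn_comp G R Q"
  have Q: "subgroup Q G" "Q \<subseteq> carrier G"
    using def_subgroup_subgroup[OF assms] def_subgroup_subset[OF assms] by auto
  have P: "def_subgroup G R ?P" "fin_index G ?P Q" "subgroup ?P G" "?P \<subseteq> Q"
    using def_subgroup_conn_comp[OF assms] fin_index_conn_comp[OF assms]
    by (auto simp: def_subgroup_subgroup fin_index_def)
  have conj_closed: "\<forall>h\<in>?P. q \<otimes> h \<otimes> inv q \<in> ?P" if q: "q \<in> Q" for q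
  proof -
    have "q \<in> carrier G" using q Q(2) by blast
    moreover have "\<forall>x\<in>Q. q \<otimes> x \<otimes> inv q \<in> Q"
      using q Q(1) by (simp add: subgroup.m_closed subgroup.m_inv_closed)
    ultimately have "fin_index G (Q \<inter> conj_preimage q ?P) Q"
      using fin_index_conj_preimage[OF Q(1) P(3) P(2) Q(2)] by blast
    then have "?P \<subseteq> conj_preimage q ?P"
      using conn_comp_least def_subgroup_Int[OF assms def_subgroup_conj_preimage[OF P(1) \<open>q \<in> carrier G\<close>]]
      by blast
    then show ?thesis unfolding conj_preimage_def by blast
  qed
  interpret Q_group: group "G\<lparr>carrier := Q\<rparr>" using subgroup_imp_group[OF Q(1)] .
  show ?thesis unfolding Q_group.normal_inv_iff
  proof (intro conjI ballI)
    show "subgroup ?P (G\<lparr>carrier := Q\<rparr>)" using subgroup_incl[OF P(3) Q(1) P(4)] .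
    fix x h assume "x \<in> carrier (G\<lparr>carrier := Q\<rparr>)" "h \<in> ?P"
    then show "x \<otimes>\<^bsub>G\<lparr>carrier := Q\<rparr>\<^esub> h \<otimes>\<^bsub>G\<lparr>carrier := Q\<rparr>\<^esub> inv\<^bsub>G\<lparr>carrier := Q\<rparr>\<^esub> x \<in> ?P"
      using conj_closed m_inv_consistent[OF Q(1)] by simp
  qed
qed

lemma cartan_conn_comp_carter:
  assumes "cartan G Q"
  shows "carter G R (conn_comp G R Q)"
proof -
  have Q_max: "max_nilpotent G Q" using assms unfolding cartan_def by simp
  then have Q_nil: "nilpotent_subgroup G Q" unfolding max_nilpotent_def by simp
  have Q: "def_subgroup G R Q" using max_nilpotent_def_subgroup[OF Q_max] .
  let ?P = "conn_comp G R Q"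
  have P: "def_subgroup G R ?P" "fin_index G ?P Q" "subgroup ?P G" "?P \<subseteq> Q"
    using def_subgroup_conn_comp[OF Q] fin_index_conn_comp[OF Q]
    by (auto simp: def_subgroup_subgroup fin_index_def)
  have "fin_index G ?P (normalizer G ?P)"
    using assms conn_comp_normal[OF Q] P(2) unfolding cartan_def by blast
  then show ?thesis
    unfolding carter_def
    using P(1) conn_comp_idem[OF Q] nilpotent_subgroup_subset[OF Q_nil P(3,4)] by simp
qed

lemma carter_subset_max_nilpotent:
  assumes "carter G R Q"
  shows "\<exists>Q'. max_nilpotent G Q' \<and> Q \<subseteq> Q'"
proof -
  let ?F = "{K. nilpotent_subgroup G K \<and> Q \<subseteq> K}"
  have Q: "subgroup Q G" "nilpotent_subgroup G Q" "fin_index G Q (normalizer G Q)"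
    using assms def_subgroup_subgroup unfolding carter_def by auto
  have "?F \<subseteq> {K. subgroup K G \<and> Q \<subseteq> K \<and> K \<subseteq> normalizer G Q}"
    using carter_nilpotent_overgroup_subset_normalizer[OF assms]
    unfolding nilpotent_subgroup_def by blast
  then have "finite ?F"
    using finite_intermediate_subgroups[OF Q(1,3)] finite_subset by blast
  then obtain Q' where Q': "Q' \<in> ?F" "\<forall>K\<in>?F. Q' \<subseteq> K \<longrightarrow> Q' = K"
    using finite_has_maximal2[of ?F Q] Q(2) by blast
  then have "max_nilpotent G Q'" unfolding max_nilpotent_def by blast
  then show ?thesis using Q' by blast
qed

text \<open>Such \<open>w\<close> conjugates \<open>N \<inter> Q\<close>, a subgroup of finite index in \<open>Q\<close>, into \<open>N \<subseteq> N(Q)\<close>; by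
  connectedness it conjugates all of \<open>Q\<close> into \<open>N(Q)\<close>, hence into \<open>Q\<close>.\<close>

lemma conj_into_carter_if_normalizes_fin_index_subgroup:
  assumes "carter G R Q" "Q \<subseteq> Q'" "Q' \<subseteq> normalizer G Q"
    and N: "subgroup N G" "fin_index G N Q'"
    and w: "w \<in> carrier G" "\<forall>x\<in>N. w \<otimes> x \<otimes> inv w \<in> N"
  shows "\<forall>q\<in>Q. w \<otimes> q \<otimes> inv w \<in> Q"
proof -
  have Q: "def_subgroup G R Q" "conn_comp G R Q = Q" "fin_index G Q (normalizer G Q)"
    using assms(1) unfolding carter_def by auto
  have Q_carrier: "Q \<subseteq> carrier G" using def_subgroup_subset[OF Q(1)] .
  let ?X = "Q \<inter> conj_preimage w (normalizer G Q)"
  have X: "def_subgroup G R ?X"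
    using def_subgroup_Int[OF Q(1) def_subgroup_conj_preimage[OF def_subgroup_normalizer[OF Q(1)] w(1)]] .
  have "fin_index G (N \<inter> Q) Q"
    using fin_index_Int_subgroup[OF N(1) def_subgroup_subgroup[OF Q(1)] N(2) assms(2)] .
  moreover have "N \<inter> Q \<subseteq> ?X"
    using w(2) N(2) assms(3) Q_carrier unfolding conj_preimage_def fin_index_def by blast
  ultimately have "fin_index G ?X Q"
    using fin_index_supergroup subgroups_Inter_pair[OF N(1) def_subgroup_subgroup[OF Q(1)]]
      def_subgroup_subgroup[OF X] Q_carrier by blast
  then have "Q \<subseteq> ?X"
    using connected_subset_if_fin_index[OF Q(1,2) def_subgroup_conj_preimage[OF def_subgroup_normalizer[OF Q(1)] w(1)]]
    by (simp add: Int_absorb1)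
  then show ?thesis
    using conj_into_normalizer_imp_conj_into[OF Q w(1)] unfolding conj_preimage_def by blast
qed

lemma normalizer_fin_index_subgroup_subset_normalizer_carter:
  assumes "carter G R Q" "Q \<subseteq> Q'" "Q' \<subseteq> normalizer G Q" "subgroup N G" "fin_index G N Q'"
  shows "normalizer G N \<subseteq> normalizer G Q"
proof
  have Q_carrier: "Q \<subseteq> carrier G"
    using assms(1) def_subgroup_subset unfolding carter_def by blast
  fix g assume "g \<in> normalizer G N"
  then have g: "g \<in> carrier G" "\<forall>x\<in>N. g \<otimes> x \<otimes> inv g \<in> N" "\<forall>x\<in>N. inv g \<otimes> x \<otimes> inv (inv g) \<in> N"
    using mem_normalizer_iff[OF subgroup.subset[OF assms(4)]] by auto
  show "g \<in> normalizer G Q"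
    using conj_into_carter_if_normalizes_fin_index_subgroup[OF assms g(1,2)]
      conj_into_carter_if_normalizes_fin_index_subgroup[OF assms _ g(3)] g(1)
    by (simp add: mem_normalizer_iff[OF Q_carrier])
qed

lemma max_nilpotent_over_carter_cartan:
  assumes carter: "carter G R Q" and max: "max_nilpotent G Q'" and "Q \<subseteq> Q'"
  shows "cartan G Q' \<and> conn_comp G R Q' = Q"
proof -
  have Q: "def_subgroup G R Q" "conn_comp G R Q = Q" "fin_index G Q (normalizer G Q)"
    using carter unfolding carter_def by auto
  have M: "normalizer G Q \<subseteq> carrier G"
    using normalizer_imp_subgroup[OF def_subgroup_subset[OF Q(1)]] subgroup.subset by blast
  have Q'_nil: "nilpotent_subgroup G Q'" using max unfolding max_nilpotent_def by simp
  have Q': "subgroup Q' G" using nilpotent_subgroup_subgroup[OF Q'_nil] .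
  have Q'_M: "Q' \<subseteq> normalizer G Q"
    using carter_nilpotent_overgroup_subset_normalizer[OF carter Q'_nil assms(3)] .
  have Q'_fin_index: "fin_index G Q' (normalizer G Q)"
    using fin_index_supergroup[OF def_subgroup_subgroup[OF Q(1)] Q' Q(3) assms(3) Q'_M M] .
  have "fin_index G N (normalizer G N)" if N: "N \<lhd> G\<lparr>carrier := Q'\<rparr>" "fin_index G N Q'" for N
  proof -
    have N_subgroup: "subgroup N G" using incl_subgroup[OF Q' normal_imp_subgroup[OF N(1)]] .
    have "fin_index G N (normalizer G Q)"
      using fin_index_trans[OF N_subgroup Q' N(2) Q'_fin_index M] .
    then show ?thesis
      using fin_index_subset subgroup_subset_normalizer[OF N_subgroup]
        normalizer_fin_index_subgroup_subset_normalizer_carter[OF carter assms(3) Q'_M N_subgroup N(2)]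
      by blast
  qed
  then have "cartan G Q'" unfolding cartan_def using max by blast
  moreover have "conn_comp G R Q' = Q"
    using conn_comp_eq_if_fin_index[OF Q(1,2) fin_index_subset[OF Q(3) assms(3) Q'_M]] .
  ultimately show ?thesis by simp
qed

end

theorem lemma2p4:
  fixes G :: "('a, 'b) monoid_scheme" and R :: "'r \<Rightarrow> 'a list set"
  assumes "group G" and "dcc G R"
  shows "(\<forall>H. max_nilpotent G H \<longrightarrow> definable G R H)
    \<and> (\<forall>Q. cartan G Q \<longrightarrow> definable G R Q \<and> carter G R (conn_comp G R Q))
    \<and> (\<forall>Q. carter G R Q \<longrightarrow>
          (\<exists>Q'. max_nilpotent G Q' \<and> Q \<subseteq> Q') \<and>
          (\<forall>Q'. max_nilpotent G Q' \<and> Q \<subseteq> Q' \<longrightarrow> cartan G Q' \<and> conn_comp G R Q' = Q))"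
proof -
  interpret dcc_group G R
    using assms by (simp add: dcc_group_def dcc_group_axioms_def)
  have "definable G R H" if "max_nilpotent G H" for H
    using max_nilpotent_def_subgroup[OF that] unfolding def_subgroup_def by simp
  moreover have "cartan G Q \<Longrightarrow> max_nilpotent G Q" for Q
    unfolding cartan_def by simp
  ultimately show ?thesis
    using cartan_conn_comp_carter carter_subset_max_nilpotent max_nilpotent_over_carter_cartan by blast
qed

end
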